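(* If $(A,W)$ is a Pratt comonoid such that $W$ is closed under complementation in $A$, then $W$ is closed under forming arbitrary unions, and also under forming arbitrary intersections.
   Context: A Pratt comonoid is a pair $(A,W)$ where $A$ is a set and $W$ is a set of subsets of $A$ such that (i) $\emptyset\in W$ and $A\in W$; (ii) whenever $C\subseteq A\times A$ is such that for every $a\in A$ both the $a$-th row $\{b\mid (a,b)\in C\}$ and the $a$-th column $\{b\mid (b,a)\in C\}$ belong to $W$ (a crossword over $W$), the diagonal $\{b\mid (b,b)\in C\}$ also belongs to $W$. *)

theory Defs
  imports Main
begin

definition crossword :: "'a set \<Rightarrow> 'a set set \<Rightarrow> ('a \<times> 'a) set \<Rightarrow> bool" where
  "crossword A W C \<longleftrightarrow> C \<subseteq> A \<times> A \<and>
     (\<forall>a\<in>A. {b. (a, b) \<in> C} \<in> W \<and> {b. (b, a) \<in> C} \<in> W)"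

definition pratt_comonoid :: "'a set \<Rightarrow> 'a set set \<Rightarrow> bool" where
  "pratt_comonoid A W \<longleftrightarrow> W \<subseteq> Pow A \<and> {} \<in> W \<and> A \<in> W \<and>
     (\<forall>C. crossword A W C \<longrightarrow> {b. (b, b) \<in> C} \<in> W)"

end

theory Submission
  imports Defs
begin

text \<open>Crosswords of the form \<open>P \<times> Q\<close> and \<open>\<Union>X\<in>G. X \<times> X\<close> show that \<open>W\<close> is closed under
  binary intersections and under unions of pairwise disjoint families. Together with
  complements this gives differences, and an arbitrary family is then reduced to a disjoint
  one by well-ordering it and replacing each member by its part not covered by its
  predecessors; the union of the predecessors lies in \<open>W\<close> by well-founded induction.
  Intersections follow by De Morgan.\<close>

definition disjointed_wrt :: "('a set \<times> 'a set) set \<Rightarrow> 'a set \<Rightarrow> 'a set" where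
  "disjointed_wrt s X = X - \<Union>{Y. (Y, X) \<in> s}"

lemma Union_disjointed_wrt:
  assumes "wf s" and downward_closed: "\<And>Y Z. Y \<in> H \<Longrightarrow> (Z, Y) \<in> s \<Longrightarrow> Z \<in> H"
  shows "\<Union>(disjointed_wrt s ` H) = \<Union>H"
proof
  show "\<Union>(disjointed_wrt s ` H) \<subseteq> \<Union>H"
    unfolding disjointed_wrt_def by blast
  show "\<Union>H \<subseteq> \<Union>(disjointed_wrt s ` H)"
  proof
    fix a assume "a \<in> \<Union>H"
    then obtain Y where "Y \<in> {Y \<in> H. a \<in> Y}" by blast
    from wfE_min[OF \<open>wf s\<close> this] obtain Z where Z: "Z \<in> {Y \<in> H. a \<in> Y}"
      and minimal: "\<And>Y. (Y, Z) \<in> s \<Longrightarrow> Y \<notin> {Y \<in> H. a \<in> Y}"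
      by blast
    have "a \<in> disjointed_wrt s Z"
      unfolding disjointed_wrt_def using Z minimal downward_closed by blast
    then show "a \<in> \<Union>(disjointed_wrt s ` H)" using Z by blast
  qed
qed

lemma pairwise_disjnt_disjointed_wrt:
  assumes "\<And>X Y. X \<in> H \<Longrightarrow> Y \<in> H \<Longrightarrow> X \<noteq> Y \<Longrightarrow> (X, Y) \<in> s \<or> (Y, X) \<in> s"
  shows "pairwise disjnt (disjointed_wrt s ` H)"
proof (rule pairwiseI)
  fix P Q assume "P \<in> disjointed_wrt s ` H" "Q \<in> disjointed_wrt s ` H" "P \<noteq> Q"
  then obtain X Y where "X \<in> H" "Y \<in> H" "X \<noteq> Y" "P = disjointed_wrt s X" "Q = disjointed_wrt s Y"
    by blast
  with assms show "disjnt P Q" unfolding disjnt_def disjointed_wrt_def by blast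
qed

lemma Union_mem_if_closed_Diff_disjoint_Union:
  assumes Diff: "\<And>P Q. P \<in> W \<Longrightarrow> Q \<in> W \<Longrightarrow> P - Q \<in> W"
    and disjoint_Union: "\<And>G. G \<subseteq> W \<Longrightarrow> pairwise disjnt G \<Longrightarrow> \<Union>G \<in> W"
    and "F \<subseteq> W"
  shows "\<Union>F \<in> W"
proof -
  obtain r where r: "well_order_on F r" using well_order_on by blast
  define s where "s = r - Id"
  have "wf s" using r unfolding s_def well_order_on_def by blast
  have "trans s" using r unfolding s_def order_on_defs by (simp add: trans_diff_Id)
  have s_F: "s \<subseteq> F \<times> F" using r unfolding s_def order_on_defs by blast
  have total: "\<And>X Y. X \<in> F \<Longrightarrow> Y \<in> F \<Longrightarrow> X \<noteq> Y \<Longrightarrow> (X, Y) \<in> s \<or> (Y, X) \<in> s"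
    using r unfolding s_def order_on_defs total_on_def by blast
  have Union_disjointed_mem:
    "\<Union>(disjointed_wrt s ` H) \<in> W" if "H \<subseteq> F" "\<And>X. X \<in> H \<Longrightarrow> \<Union>{Y. (Y, X) \<in> s} \<in> W" for H
  proof (rule disjoint_Union)
    show "disjointed_wrt s ` H \<subseteq> W"
      using that \<open>F \<subseteq> W\<close> Diff unfolding disjointed_wrt_def by blast
    show "pairwise disjnt (disjointed_wrt s ` H)"
      using total that(1) by (intro pairwise_disjnt_disjointed_wrt) blast
  qed
  have predecessors_mem: "\<Union>{Y. (Y, X) \<in> s} \<in> W" for X
  proof (induction X rule: wf_induct_rule[OF \<open>wf s\<close>])
    case (1 X)
    let ?H = "{Y. (Y, X) \<in> s}"
    have "\<Union>(disjointed_wrt s ` ?H) = \<Union>?H"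
      using \<open>trans s\<close> by (intro Union_disjointed_wrt[OF \<open>wf s\<close>]) (auto dest: transD)
    moreover have "\<Union>(disjointed_wrt s ` ?H) \<in> W"
      using s_F 1 by (intro Union_disjointed_mem) auto
    ultimately show ?case by simp
  qed
  have "\<Union>(disjointed_wrt s ` F) = \<Union>F"
    using s_F by (intro Union_disjointed_wrt[OF \<open>wf s\<close>]) auto
  moreover have "\<Union>(disjointed_wrt s ` F) \<in> W"
    using predecessors_mem by (intro Union_disjointed_mem) auto
  ultimately show ?thesis by simp
qed

lemma pratt_comonoid_subset: "pratt_comonoid A W \<Longrightarrow> X \<in> W \<Longrightarrow> X \<subseteq> A"
  unfolding pratt_comonoid_def by blast

lemma pratt_comonoid_empty: "pratt_comonoid A W \<Longrightarrow> {} \<in> W"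
  unfolding pratt_comonoid_def by blast

lemma pratt_comonoid_diagonal:
  "pratt_comonoid A W \<Longrightarrow> crossword A W C \<Longrightarrow> {b. (b, b) \<in> C} \<in> W"
  unfolding pratt_comonoid_def by blast

lemma pratt_comonoid_Int:
  assumes pc: "pratt_comonoid A W" and "P \<in> W" "Q \<in> W"
  shows "P \<inter> Q \<in> W"
proof -
  have "crossword A W (P \<times> Q)"
    unfolding crossword_def
  proof (intro conjI ballI)
    show "P \<times> Q \<subseteq> A \<times> A" using assms pratt_comonoid_subset by blast
  next
    fix a
    have "{b. (a, b) \<in> P \<times> Q} = (if a \<in> P then Q else {})"
      and "{b. (b, a) \<in> P \<times> Q} = (if a \<in> Q then P else {})" by auto
    then show "{b. (a, b) \<in> P \<times> Q} \<in> W" "{b. (b, a) \<in> P \<times> Q} \<in> W"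
      using assms pratt_comonoid_empty[OF pc] by simp_all
  qed
  moreover have "{b. (b, b) \<in> P \<times> Q} = P \<inter> Q" by auto
  ultimately show ?thesis using pratt_comonoid_diagonal[OF pc] by metis
qed

lemma pratt_comonoid_disjoint_Union:
  assumes pc: "pratt_comonoid A W" and "G \<subseteq> W" and disjoint: "pairwise disjnt G"
  shows "\<Union>G \<in> W"
proof -
  define C where "C = (\<Union>X\<in>G. X \<times> X)"
  have row: "{b. (a, b) \<in> C} \<in> W" for a
  proof (cases "\<exists>X\<in>G. a \<in> X")
    case True
    then obtain X where X: "X \<in> G" "a \<in> X" by blast
    have "{b. (a, b) \<in> C} = X"
      unfolding C_def using X disjoint by (auto simp: pairwise_def disjnt_def)
    then show ?thesis using X \<open>G \<subseteq> W\<close> by auto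
  next
    case False
    then have "{b. (a, b) \<in> C} = {}" unfolding C_def by blast
    then show ?thesis using pratt_comonoid_empty[OF pc] by simp
  qed
  have "{b. (b, a) \<in> C} = {b. (a, b) \<in> C}" for a unfolding C_def by blast
  moreover have "C \<subseteq> A \<times> A"
    unfolding C_def using \<open>G \<subseteq> W\<close> pratt_comonoid_subset[OF pc] by blast
  ultimately have "crossword A W C" unfolding crossword_def using row by simp
  moreover have "{b. (b, b) \<in> C} = \<Union>G" unfolding C_def by blast
  ultimately show ?thesis using pratt_comonoid_diagonal[OF pc] by metis
qed

lemma pratt_comonoid_Diff:
  assumes pc: "pratt_comonoid A W" and compl: "\<forall>X\<in>W. A - X \<in> W"
    and "P \<in> W" "Q \<in> W"
  shows "P - Q \<in> W"
proof -
  have "P - Q = P \<inter> (A - Q)" using pratt_comonoid_subset[OF pc \<open>P \<in> W\<close>] by blast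
  then show ?thesis using pratt_comonoid_Int[OF pc] compl assms(3,4) by simp
qed

theorem corollary4p3:
  fixes A :: "'a set" and W :: "'a set set"
  assumes "pratt_comonoid A W"
    and "\<forall>X\<in>W. A - X \<in> W"
  shows "(\<forall>F. F \<subseteq> W \<longrightarrow> \<Union>F \<in> W) \<and> (\<forall>F. F \<subseteq> W \<longrightarrow> A \<inter> \<Inter>F \<in> W)"
proof -
  have Union: "\<Union>F \<in> W" if "F \<subseteq> W" for F
    using pratt_comonoid_Diff[OF assms] pratt_comonoid_disjoint_Union[OF assms(1)] that
    by (rule Union_mem_if_closed_Diff_disjoint_Union)
  have "A \<inter> \<Inter>F \<in> W" if "F \<subseteq> W" for F
  proof -
    have "A - \<Union>((-) A ` F) \<in> W" using Union[of "(-) A ` F"] that assms(2) by blast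
    moreover have "A - \<Union>((-) A ` F) = A \<inter> \<Inter>F" by blast
    ultimately show ?thesis by simp
  qed
  with Union show ?thesis by blast
qed

end
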